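(* Let $\langle S,L,\tau,\ell\rangle$ be a labelled Markov chain. Robust bisimilarity $\simeq$ is a robust bisimulation.
   Context: Labelled Markov chain $\langle S,L,\tau,\ell\rangle$: finite $S$, finite $L$, $\tau:S\to\mathcal{D}(S)$, $\ell:S\to L$, $|\ell(S)|\ge 2$. $\Omega(\mu,\nu)$ = couplings (distributions on $S\times S$ with marginals $\mu,\nu$). A (probabilistic) bisimulation is an equivalence relation $R\subseteq S\times S$ such that for all $(s,t)\in R$, $\ell(s)=\ell(t)$ and some $\omega\in\Omega(\tau(s),\tau(t))$ has $\mathrm{support}(\omega)\subseteq R$. $S^2_\Delta=\{(s,s)\}$, $S^2_1=\{(s,t)\mid\ell(s)\ne\ell(t)\}$. A policy is $P:S\times S\to\mathcal{D}(S\times S)$ with $P(s,t)\in\Omega(\tau(s),\tau(t))$ for $(s,t)\notin S^2_1$ and $P(s,t)$ the point mass at $(s,t)$ for $(s,t)\in S^2_1$; $\mathcal{P}$ is the set of policies; $P$ induces the Markov chain $\langle S\times S,P\rangle$. Robust bisimilarity: $s\simeq t$ iff some $P\in\mathcal{P}$ makes $(s,t)$ reach $S^2_\Delta$ with probability $1$ in $\langle S\times S,P\rangle$. For a policy $P$, a set $R\subseteq S\times S$ supports a path $(u_1,v_1)\dots(u_n,v_n)$ of $\langle S\times S,P\rangle$ if $(u_i,v_i)\in R$ and $\mathrm{support}(P(u_i,v_i))\subseteq R$ for all $1\le i\le n$. A robust bisimulation is a bisimulation $R$ such that for every $(s,t)\in R$ there is $P\in\mathcal{P}$ such that $R$ supports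 a path from $(s,t)$ to (a pair in) $S^2_\Delta$ in $\langle S\times S,P\rangle$. *)

theory Defs
  imports "HOL-Probability.Probability_Mass_Function"
begin

text \<open>Labelled Markov chain: state space = finite type 's, labels = finite type 'l,
  transition function tau :: 's => 's pmf, labelling lab :: 's => 'l.\<close>

definition couplings :: "'s pmf \<Rightarrow> 's pmf \<Rightarrow> ('s \<times> 's) pmf set" where
  "couplings \<mu> \<nu> = {\<omega>. map_pmf fst \<omega> = \<mu> \<and> map_pmf snd \<omega> = \<nu>}"

definition bisimulation :: "('s \<Rightarrow> 's pmf) \<Rightarrow> ('s \<Rightarrow> 'l) \<Rightarrow> ('s \<times> 's) set \<Rightarrow> bool" where
  "bisimulation \<tau> lab R \<longleftrightarrow> equiv UNIV R \<and>
     (\<forall>(s,t)\<in>R. lab s = lab t \<and> (\<exists>\<omega>\<in>couplings (\<tau> s) (\<tau> t). set_pmf \<omega> \<subseteq> R))"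

definition diag_pairs :: "('s \<times> 's) set" where
  "diag_pairs = {(s,s) | s. True}"

definition diff_label_pairs :: "('s \<Rightarrow> 'l) \<Rightarrow> ('s \<times> 's) set" where
  "diff_label_pairs lab = {(s,t). lab s \<noteq> lab t}"

definition policy :: "('s \<Rightarrow> 's pmf) \<Rightarrow> ('s \<Rightarrow> 'l) \<Rightarrow> ('s \<times> 's \<Rightarrow> ('s \<times> 's) pmf) \<Rightarrow> bool" where
  "policy \<tau> lab P \<longleftrightarrow>
     (\<forall>s t. ((s,t) \<notin> diff_label_pairs lab \<longrightarrow> P (s,t) \<in> couplings (\<tau> s) (\<tau> t)) \<and>
            ((s,t) \<in> diff_label_pairs lab \<longrightarrow> P (s,t) = return_pmf (s,t)))"

text \<open>Distribution of the first n steps (paths of length n+1) of the Markov chain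
  with transition function P started in x.\<close>
primrec path_pmf :: "('a \<Rightarrow> 'a pmf) \<Rightarrow> 'a \<Rightarrow> nat \<Rightarrow> 'a list pmf" where
  "path_pmf P x 0 = return_pmf [x]"
| "path_pmf P x (Suc n) = bind_pmf (P x) (\<lambda>y. map_pmf (\<lambda>p. x # p) (path_pmf P y n))"

definition reach_prob :: "('a \<Rightarrow> 'a pmf) \<Rightarrow> 'a set \<Rightarrow> 'a \<Rightarrow> real" where
  "reach_prob P T x = (SUP n. measure_pmf.prob (path_pmf P x n) {p. \<exists>z\<in>set p. z \<in> T})"

definition robust_bisimilar :: "('s \<Rightarrow> 's pmf) \<Rightarrow> ('s \<Rightarrow> 'l) \<Rightarrow> 's \<Rightarrow> 's \<Rightarrow> bool" where
  "robust_bisimilar \<tau> lab s t \<longleftrightarrow>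
     (\<exists>P. policy \<tau> lab P \<and> reach_prob P diag_pairs (s,t) = 1)"

definition is_path :: "('a \<Rightarrow> 'a pmf) \<Rightarrow> 'a list \<Rightarrow> bool" where
  "is_path P xs \<longleftrightarrow> xs \<noteq> [] \<and> (\<forall>i. Suc i < length xs \<longrightarrow> xs ! Suc i \<in> set_pmf (P (xs ! i)))"

definition supports :: "('a \<Rightarrow> 'a pmf) \<Rightarrow> 'a set \<Rightarrow> 'a list \<Rightarrow> bool" where
  "supports P R xs \<longleftrightarrow> (\<forall>x\<in>set xs. x \<in> R \<and> set_pmf (P x) \<subseteq> R)"

definition robust_bisimulation :: "('s \<Rightarrow> 's pmf) \<Rightarrow> ('s \<Rightarrow> 'l) \<Rightarrow> ('s \<times> 's) set \<Rightarrow> bool" where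
  "robust_bisimulation \<tau> lab R \<longleftrightarrow> bisimulation \<tau> lab R \<and>
     (\<forall>(s,t)\<in>R. \<exists>P. policy \<tau> lab P \<and>
        (\<exists>xs. is_path P xs \<and> hd xs = (s,t) \<and> last xs \<in> diag_pairs \<and> supports P R xs))"

end

theory Submission
  imports Defs
begin

(* Call a set X of pairs attracting if it contains the diagonal and every pair in X reaches the
   diagonal in finitely many steps along some chain of couplings that respect labels and are
   supported in X. Fixing at each pair of X a coupling that brings it strictly closer to the
   diagonal yields a policy under which X is closed and the diagonal is reachable with positive
   probability from every pair of X; in a finite chain the diagonal is then reached with
   probability 1, so attracting sets consist of robustly bisimilar pairs. Conversely, under a policy
   reaching the diagonal almost surely, every successor of an off-diagonal pair again reaches it
   almost surely and that pair has equal labels, so robust bisimilarity is itself attracting.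
   Reflexivity, symmetry and transitivity follow because the diagonal, the converse of robust
   bisimilarity and its composition with itself are attracting (for the composition, couplings are
   glued along their common marginal); the policy built for robust bisimilarity itself supplies the
   supported paths. *)

section \<open>Reachability in finite Markov chains\<close>

lemma measure_bind_pmf:
  "measure_pmf.prob (bind_pmf M f) A = (\<integral>x. measure_pmf.prob (f x) A \<partial>measure_pmf M)"
  unfolding measure_pmf_bind
  by (subst measure_pmf.measure_bind[where N="count_space UNIV"]) (auto simp: measure_subprob)

lemma sum_pmf_UNIV: "(\<Sum>y\<in>(UNIV::'a::finite set). pmf M y) = 1"
  by (rule sum_pmf_eq_1) auto

primrec hit_prob :: "('a::finite \<Rightarrow> 'a pmf) \<Rightarrow> 'a set \<Rightarrow> nat \<Rightarrow> 'a \<Rightarrow> real" where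
  "hit_prob Q T 0 x = (if x \<in> T then 1 else 0)"
| "hit_prob Q T (Suc n) x = (if x \<in> T then 1 else (\<Sum>y\<in>UNIV. pmf (Q x) y * hit_prob Q T n y))"

lemma hit_prob_target: "x \<in> T \<Longrightarrow> hit_prob Q T n x = 1"
  by (cases n) auto

lemma hit_prob_nonneg: "0 \<le> hit_prob Q T n x"
  by (induction n arbitrary: x) (auto intro!: sum_nonneg)

lemma hit_prob_le_1: "hit_prob Q T n x \<le> 1"
proof (induction n arbitrary: x)
  case (Suc n)
  have "(\<Sum>y\<in>UNIV. pmf (Q x) y * hit_prob Q T n y) \<le> (\<Sum>y\<in>UNIV. pmf (Q x) y)"
    by (intro sum_mono) (simp add: Suc mult_left_le)
  then show ?case by (simp add: sum_pmf_UNIV)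
qed simp

lemma one_minus_hit_prob_Suc:
  "x \<notin> T \<Longrightarrow> 1 - hit_prob Q T (Suc n) x = (\<Sum>y\<in>UNIV. pmf (Q x) y * (1 - hit_prob Q T n y))"
  by (simp add: right_diff_distrib sum_subtractf sum_pmf_UNIV)

lemma prob_path_pmf_hits:
  "measure_pmf.prob (path_pmf Q x n) {p. \<exists>z\<in>set p. z \<in> T} = hit_prob Q T n x"
proof (induction n arbitrary: x)
  case 0 then show ?case by (simp add: measure_return_pmf)
next
  case (Suc n)
  let ?A = "{p. \<exists>z\<in>set p. z \<in> T}"
  have "measure_pmf.prob (path_pmf Q x (Suc n)) ?A =
     (\<integral>y. measure_pmf.prob (path_pmf Q y n) ((\<lambda>p. x # p) -` ?A) \<partial>measure_pmf (Q x))"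
    by (simp add: measure_bind_pmf)
  also have "\<dots> = hit_prob Q T (Suc n) x"
  proof (cases "x \<in> T")
    case True
    then have "(\<lambda>p. x # p) -` ?A = UNIV" by auto
    then show ?thesis using True by simp
  next
    case False
    then have "(\<lambda>p. x # p) -` ?A = ?A" by auto
    then show ?thesis using False
      by (simp add: Suc integral_measure_pmf_real[where A=UNIV] mult.commute)
  qed
  finally show ?case .
qed

lemma reach_prob_eq_SUP_hit_prob:
  fixes Q :: "'a::finite \<Rightarrow> 'a pmf"
  shows "reach_prob Q T x = (SUP n. hit_prob Q T n x)"
  unfolding reach_prob_def prob_path_pmf_hits ..

lemma hit_prob_le_reach_prob:
  fixes Q :: "'a::finite \<Rightarrow> 'a pmf"
  shows "hit_prob Q T n x \<le> reach_prob Q T x"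
  unfolding reach_prob_eq_SUP_hit_prob
  by (rule cSUP_upper) (auto intro: bdd_aboveI[where M=1] simp: hit_prob_le_1)

lemma reach_prob_le_1:
  fixes Q :: "'a::finite \<Rightarrow> 'a pmf"
  shows "reach_prob Q T x \<le> 1"
  unfolding reach_prob_eq_SUP_hit_prob by (rule cSUP_least) (auto simp: hit_prob_le_1)

lemma reach_prob_eq_1_successor:
  fixes Q :: "'a::finite \<Rightarrow> 'a pmf"
  assumes x: "reach_prob Q T x = 1" "x \<notin> T" and y: "y \<in> set_pmf (Q x)"
  shows "reach_prob Q T y = 1"
proof (rule ccontr)
  define p L where "p = pmf (Q x) y" and "L = reach_prob Q T y"
  have "0 \<le> L" "L \<le> 1"
    using hit_prob_nonneg[of Q T 0 y] hit_prob_le_reach_prob[of Q T 0 y] reach_prob_le_1[of Q T y]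
    by (auto simp: L_def)
  assume "reach_prob Q T y \<noteq> 1"
  with \<open>L \<le> 1\<close> y have gap: "0 < p * (1 - L)"
    by (simp add: p_def L_def pmf_positive)
  have "hit_prob Q T n x \<le> 1 - p * (1 - L)" for n
  proof (cases n)
    case 0
    have "p * (1 - L) \<le> 1 * 1"
      using \<open>0 \<le> L\<close> \<open>L \<le> 1\<close> by (intro mult_mono) (auto simp: p_def pmf_le_1)
    with 0 x(2) show ?thesis by simp
  next
    case (Suc m)
    have "p * (1 - L) \<le> p * (1 - hit_prob Q T m y)"
      using hit_prob_le_reach_prob[of Q T m y] by (intro mult_left_mono) (auto simp: p_def L_def)
    also have "\<dots> \<le> (\<Sum>z\<in>UNIV. pmf (Q x) z * (1 - hit_prob Q T m z))"
      unfolding p_def by (rule member_le_sum) (auto simp: hit_prob_le_1)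
    also have "\<dots> = 1 - hit_prob Q T n x"
      using one_minus_hit_prob_Suc[OF x(2)] Suc by simp
    finally show ?thesis by simp
  qed
  then have "reach_prob Q T x \<le> 1 - p * (1 - L)"
    unfolding reach_prob_eq_SUP_hit_prob by (rule cSUP_least[OF UNIV_not_empty])
  with gap x(1) show False by simp
qed

fun can_reach :: "('a \<Rightarrow> 'a pmf) \<Rightarrow> 'a set \<Rightarrow> nat \<Rightarrow> 'a \<Rightarrow> bool" where
  "can_reach Q T 0 x \<longleftrightarrow> x \<in> T"
| "can_reach Q T (Suc n) x \<longleftrightarrow> x \<in> T \<or> (\<exists>y\<in>set_pmf (Q x). can_reach Q T n y)"

lemma can_reach_mono: "can_reach Q T m x \<Longrightarrow> m \<le> n \<Longrightarrow> can_reach Q T n x"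
proof (induction m arbitrary: n x)
  case 0 then show ?case by (cases n) auto
next
  case (Suc m) then show ?case by (cases n) auto
qed

lemma can_reach_self_loop: "x \<notin> T \<Longrightarrow> set_pmf (Q x) = {x} \<Longrightarrow> \<not> can_reach Q T n x"
  by (induction n) auto

lemma hit_prob_pos_iff_can_reach: "0 < hit_prob Q T n x \<longleftrightarrow> can_reach Q T n x"
proof (induction n arbitrary: x)
  case (Suc n)
  have nonneg: "0 \<le> pmf (Q x) y * hit_prob Q T n y" for y
    by (simp add: hit_prob_nonneg)
  have "(\<Sum>y\<in>UNIV. pmf (Q x) y * hit_prob Q T n y) = 0
      \<longleftrightarrow> (\<forall>y\<in>UNIV. pmf (Q x) y * hit_prob Q T n y = 0)"
    by (intro sum_nonneg_eq_0_iff) (auto simp: nonneg)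
  then have "0 < (\<Sum>y\<in>UNIV. pmf (Q x) y * hit_prob Q T n y)
      \<longleftrightarrow> (\<exists>y. 0 < pmf (Q x) y * hit_prob Q T n y)"
    using sum_nonneg[of UNIV, OF nonneg] nonneg by (auto simp: order_less_le)
  also have "\<dots> \<longleftrightarrow> (\<exists>y\<in>set_pmf (Q x). can_reach Q T n y)"
    using pmf_nonneg[of "Q x"] by (auto simp: zero_less_mult_iff pmf_positive_iff Suc)
  finally show ?case by simp
qed simp

lemma reach_prob_pos_imp_can_reach:
  fixes Q :: "'a::finite \<Rightarrow> 'a pmf"
  assumes "0 < reach_prob Q T x"
  shows "\<exists>n. can_reach Q T n x"
proof (rule ccontr)
  assume "\<nexists>n. can_reach Q T n x"
  then have "hit_prob Q T n x \<le> 0" for n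
    using hit_prob_pos_iff_can_reach[of Q T n x] by auto
  then have "reach_prob Q T x \<le> 0"
    unfolding reach_prob_eq_SUP_hit_prob by (intro cSUP_least) auto
  with assms show False by simp
qed

lemma one_minus_hit_prob_add_le:
  fixes Q :: "'a::finite \<Rightarrow> 'a pmf"
  assumes closed: "\<And>x. x \<in> W \<Longrightarrow> x \<notin> T \<Longrightarrow> set_pmf (Q x) \<subseteq> W"
    and escape: "\<And>y. y \<in> W \<Longrightarrow> 1 - hit_prob Q T N y \<le> M"
    and "y \<in> W"
  shows "1 - hit_prob Q T (m + N) y \<le> (1 - hit_prob Q T m y) * M"
  using \<open>y \<in> W\<close>
proof (induction m arbitrary: y)
  case 0
  then show ?case using escape[of y] by (cases "y \<in> T") (auto simp: hit_prob_target)
next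
  case (Suc m)
  show ?case
  proof (cases "y \<in> T")
    case True then show ?thesis by (simp add: hit_prob_target)
  next
    case False
    have "1 - hit_prob Q T (Suc m + N) y = (\<Sum>z\<in>UNIV. pmf (Q y) z * (1 - hit_prob Q T (m + N) z))"
      using one_minus_hit_prob_Suc[OF False] by simp
    also have "\<dots> \<le> (\<Sum>z\<in>UNIV. pmf (Q y) z * ((1 - hit_prob Q T m z) * M))"
    proof (rule sum_mono)
      fix z
      show "pmf (Q y) z * (1 - hit_prob Q T (m + N) z) \<le> pmf (Q y) z * ((1 - hit_prob Q T m z) * M)"
      proof (cases "z \<in> set_pmf (Q y)")
        case True
        then have "z \<in> W" using closed[OF Suc.prems False] by auto
        then show ?thesis using Suc.IH by (intro mult_left_mono) auto
      next
        case False then show ?thesis by (simp add: set_pmf_eq)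
      qed
    qed
    also have "\<dots> = (1 - hit_prob Q T (Suc m) y) * M"
      using one_minus_hit_prob_Suc[OF False, of Q m] by (simp add: sum_distrib_right mult.assoc)
    finally show ?thesis .
  qed
qed

lemma reach_prob_eq_1_if_closed:
  fixes Q :: "'a::finite \<Rightarrow> 'a pmf"
  assumes closed: "\<And>x. x \<in> W \<Longrightarrow> x \<notin> T \<Longrightarrow> set_pmf (Q x) \<subseteq> W"
    and can: "\<And>x. x \<in> W \<Longrightarrow> \<exists>n. can_reach Q T n x"
    and "x \<in> W"
  shows "reach_prob Q T x = 1"
proof -
  obtain nx where nx: "\<And>y. y \<in> W \<Longrightarrow> can_reach Q T (nx y) y"
    using can by metis
  define N where "N = Max (nx ` W)"
  define M where "M = Max (insert 0 ((\<lambda>y. 1 - hit_prob Q T N y) ` W))"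
  have "0 \<le> M"
    unfolding M_def by (intro Max_ge) auto
  have escape: "1 - hit_prob Q T N y \<le> M" if "y \<in> W" for y
    unfolding M_def using that by (intro Max_ge) auto
  have "0 < hit_prob Q T N y" if "y \<in> W" for y
    unfolding hit_prob_pos_iff_can_reach N_def using that
    by (intro can_reach_mono[OF nx]) auto
  then have "M < 1"
    unfolding M_def by (subst Max_less_iff) auto
  \<comment> \<open>From every state of W, a block of N steps misses T with probability at most M < 1.\<close>
  have decay: "1 - hit_prob Q T (k * N) x \<le> M ^ k" for k
  proof (induction k)
    case 0 then show ?case using hit_prob_nonneg[of Q T 0 x] by simp
  next
    case (Suc k)
    have "1 - hit_prob Q T (Suc k * N) x \<le> (1 - hit_prob Q T (k * N) x) * M"
      using one_minus_hit_prob_add_le[OF closed escape \<open>x \<in> W\<close>, of "k * N"]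
      by (simp add: add.commute)
    also have "\<dots> \<le> M ^ k * M"
      using Suc \<open>0 \<le> M\<close> by (intro mult_right_mono)
    finally show ?case by (simp add: mult.commute)
  qed
  show ?thesis
  proof (rule ccontr)
    assume "reach_prob Q T x \<noteq> 1"
    then have "0 < 1 - reach_prob Q T x"
      using reach_prob_le_1[of Q T x] by simp
    then obtain k where "M ^ k < 1 - reach_prob Q T x"
      using real_arch_pow_inv \<open>M < 1\<close> by blast
    with decay[of k] hit_prob_le_reach_prob[of Q T "k * N" x] show False by simp
  qed
qed

lemma is_path_Cons:
  assumes "ys \<noteq> []"
  shows "is_path Q (x # ys) \<longleftrightarrow> hd ys \<in> set_pmf (Q x) \<and> is_path Q ys"
proof -
  have "(\<forall>i. Suc i < length (x # ys) \<longrightarrow> (x # ys) ! Suc i \<in> set_pmf (Q ((x # ys) ! i)))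
      \<longleftrightarrow> ys ! 0 \<in> set_pmf (Q x) \<and> (\<forall>i. Suc i < length ys \<longrightarrow> ys ! Suc i \<in> set_pmf (Q (ys ! i)))"
    using assms by (auto simp: nth_Cons split: nat.splits)
  with assms show ?thesis
    by (simp add: is_path_def hd_conv_nth)
qed

lemma can_reach_imp_path:
  assumes "can_reach Q T n x" "x \<in> W" and closed: "\<And>y. y \<in> W \<Longrightarrow> set_pmf (Q y) \<subseteq> W"
  shows "\<exists>xs. is_path Q xs \<and> hd xs = x \<and> last xs \<in> T \<and> set xs \<subseteq> W"
  using assms(1,2)
proof (induction n arbitrary: x)
  case 0 then show ?case by (intro exI[of _ "[x]"]) (auto simp: is_path_def)
next
  case (Suc n)
  show ?case
  proof (cases "x \<in> T")
    case True then show ?thesis using Suc.prems by (intro exI[of _ "[x]"]) (auto simp: is_path_def)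
  next
    case False
    then obtain y where y: "y \<in> set_pmf (Q x)" "can_reach Q T n y"
      using Suc.prems by auto
    with closed Suc.prems obtain ys where ys: "is_path Q ys" "hd ys = y" "last ys \<in> T" "set ys \<subseteq> W"
      using Suc.IH by blast
    then have "ys \<noteq> []" by (auto simp: is_path_def)
    with ys y(1) Suc.prems show ?thesis
      by (intro exI[of _ "x # ys"]) (auto simp: is_path_Cons)
  qed
qed

section \<open>Couplings and policies\<close>

lemma mem_diag_pairs_iff [simp]: "x \<in> diag_pairs \<longleftrightarrow> fst x = snd x"
  by (cases x) (auto simp: diag_pairs_def)

lemma mem_diff_label_pairs_iff [simp]: "x \<in> diff_label_pairs lab \<longleftrightarrow> lab (fst x) \<noteq> lab (snd x)"
  by (cases x) (auto simp: diff_label_pairs_def)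

lemma couplings_common_marginal:
  assumes "\<omega>1 \<in> couplings \<mu> \<nu>" and "\<omega>2 \<in> couplings \<nu> \<rho>"
  shows "snd ` set_pmf \<omega>1 = fst ` set_pmf \<omega>2"
proof -
  have "set_pmf (map_pmf snd \<omega>1) = set_pmf (map_pmf fst \<omega>2)"
    using assms by (simp add: couplings_def)
  then show ?thesis by simp
qed

lemma couplings_relcomp:
  assumes "\<omega>1 \<in> couplings \<mu> \<nu>" and "\<omega>2 \<in> couplings \<nu> \<rho>"
  shows "\<exists>\<omega>\<in>couplings \<mu> \<rho>. set_pmf \<omega> = set_pmf \<omega>1 O set_pmf \<omega>2"
proof -
  have \<mu>: "\<mu> = map_pmf fst \<omega>1" and \<nu>: "\<nu> = map_pmf snd \<omega>1" "\<nu> = map_pmf fst \<omega>2"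
    and \<rho>: "\<rho> = map_pmf snd \<omega>2"
    using assms by (auto simp: couplings_def)
  define \<omega> where "\<omega> = bind_pmf \<omega>1 (\<lambda>xy. bind_pmf (cond_pmf \<omega>2 {yz. fst yz = snd xy})
    (\<lambda>yz. return_pmf (fst xy, snd yz)))"
  have nonempty: "set_pmf \<omega>2 \<inter> {yz. fst yz = snd xy} \<noteq> {}" if "xy \<in> set_pmf \<omega>1" for xy
  proof -
    have "snd xy \<in> fst ` set_pmf \<omega>2"
      using that couplings_common_marginal[OF assms] by blast
    then show ?thesis by auto
  qed
  have "set_pmf \<omega> = set_pmf \<omega>1 O set_pmf \<omega>2"
  proof
    show "set_pmf \<omega> \<subseteq> set_pmf \<omega>1 O set_pmf \<omega>2"
      using nonempty by (auto simp: \<omega>_def set_cond_pmf)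
  next
    show "set_pmf \<omega>1 O set_pmf \<omega>2 \<subseteq> set_pmf \<omega>"
    proof
      fix xz assume "xz \<in> set_pmf \<omega>1 O set_pmf \<omega>2"
      then obtain x y z where xz: "xz = (x, z)" and xy: "(x, y) \<in> set_pmf \<omega>1"
        and yz: "(y, z) \<in> set_pmf \<omega>2"
        by auto
      have "(y, z) \<in> set_pmf (cond_pmf \<omega>2 {yz. fst yz = snd (x, y)})"
        using nonempty[OF xy] yz by (subst set_cond_pmf) auto
      then show "xz \<in> set_pmf \<omega>" unfolding \<omega>_def xz using xy by force
    qed
  qed
  moreover have "map_pmf fst \<omega> = \<mu>"
    using nonempty by (simp add: \<omega>_def map_bind_pmf split_beta map_pmf_def[symmetric] \<mu> map_pmf_comp)
  moreover have "map_pmf snd \<omega> = \<rho>"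
  proof -
    have "map_pmf snd \<omega> = map_pmf snd (bind_pmf \<nu> (\<lambda>y. cond_pmf \<omega>2 {yz. fst yz = y}))"
      by (simp add: \<omega>_def \<nu>(1) split_beta bind_map_pmf map_pmf_def[symmetric] map_bind_pmf map_pmf_comp)
    then show ?thesis
      unfolding \<rho> \<nu>(2) bind_map_pmf by (subst (asm) bind_cond_pmf_cancel) (auto simp: eq_commute)
  qed
  ultimately show ?thesis by (auto simp: couplings_def)
qed

lemma map_swap_couplings: "\<omega> \<in> couplings \<mu> \<nu> \<Longrightarrow> map_pmf prod.swap \<omega> \<in> couplings \<nu> \<mu>"
  by (simp add: couplings_def pmf.map_comp comp_def)

definition diag_pmf :: "'a pmf \<Rightarrow> ('a \<times> 'a) pmf" where
  "diag_pmf \<mu> = map_pmf (\<lambda>a. (a, a)) \<mu>"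

lemma diag_pmf_couplings: "diag_pmf \<mu> \<in> couplings \<mu> \<mu>"
  by (simp add: diag_pmf_def couplings_def pmf.map_comp comp_def)

lemma set_diag_pmf_subset: "set_pmf (diag_pmf \<mu>) \<subseteq> diag_pairs"
  by (auto simp: diag_pmf_def)

lemma policy_coupling: "policy \<tau> lab P \<Longrightarrow> lab s = lab t \<Longrightarrow> P (s, t) \<in> couplings (\<tau> s) (\<tau> t)"
  by (auto simp: policy_def)

lemma policy_diff_label: "policy \<tau> lab P \<Longrightarrow> lab s \<noteq> lab t \<Longrightarrow> P (s, t) = return_pmf (s, t)"
  by (auto simp: policy_def)

definition independent_policy :: "('s \<Rightarrow> 's pmf) \<Rightarrow> ('s \<Rightarrow> 'l) \<Rightarrow> 's \<times> 's \<Rightarrow> ('s \<times> 's) pmf" where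
  "independent_policy \<tau> lab x =
     (if lab (fst x) = lab (snd x) then pair_pmf (\<tau> (fst x)) (\<tau> (snd x)) else return_pmf x)"

lemma policy_independent_policy: "policy \<tau> lab (independent_policy \<tau> lab)"
  by (auto simp: policy_def independent_policy_def couplings_def map_fst_pair_pmf map_snd_pair_pmf)

lemma policy_override:
  assumes "policy \<tau> lab P"
    and "\<And>s t. (s, t) \<in> Y \<Longrightarrow> lab s = lab t \<and> C (s, t) \<in> couplings (\<tau> s) (\<tau> t)"
  shows "policy \<tau> lab (\<lambda>x. if x \<in> Y then C x else P x)"
  using assms unfolding policy_def by auto

section \<open>Attracting sets of pairs\<close>

fun attracted :: "('s \<Rightarrow> 's pmf) \<Rightarrow> ('s \<Rightarrow> 'l) \<Rightarrow> ('s \<times> 's) set \<Rightarrow> nat \<Rightarrow> 's \<times> 's \<Rightarrow> bool" where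
  "attracted \<tau> lab X 0 x \<longleftrightarrow> x \<in> diag_pairs"
| "attracted \<tau> lab X (Suc n) x \<longleftrightarrow> x \<in> diag_pairs \<or> (x \<in> X \<and> lab (fst x) = lab (snd x) \<and>
     (\<exists>\<omega>\<in>couplings (\<tau> (fst x)) (\<tau> (snd x)). set_pmf \<omega> \<subseteq> X \<and> (\<exists>y\<in>set_pmf \<omega>. attracted \<tau> lab X n y)))"

lemma attracted_mono: "attracted \<tau> lab X n x \<Longrightarrow> X \<subseteq> Y \<Longrightarrow> attracted \<tau> lab Y n x"
proof (induction n arbitrary: x)
  case (Suc n) then show ?case by simp blast
qed simp

lemma attracted_swap: "attracted \<tau> lab X n x \<Longrightarrow> attracted \<tau> lab (X\<inverse>) n (prod.swap x)"
proof (induction n arbitrary: x)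
  case (Suc n)
  show ?case
  proof (cases "x \<in> diag_pairs")
    case False
    then obtain \<omega> y where \<omega>: "\<omega> \<in> couplings (\<tau> (fst x)) (\<tau> (snd x))" "set_pmf \<omega> \<subseteq> X"
      and y: "y \<in> set_pmf \<omega>" "attracted \<tau> lab X n y" and "x \<in> X" "lab (fst x) = lab (snd x)"
      using Suc.prems by auto
    moreover have "prod.swap y \<in> set_pmf (map_pmf prod.swap \<omega>)"
      using y(1) by simp
    moreover have "set_pmf (map_pmf prod.swap \<omega>) \<subseteq> X\<inverse>" "prod.swap x \<in> X\<inverse>"
      using \<omega>(2) \<open>x \<in> X\<close> by (auto simp: prod.swap_def)
    ultimately show ?thesis
      using map_swap_couplings[OF \<omega>(1)] Suc.IH[OF y(2)]
      by (auto intro!: bexI[of _ "map_pmf prod.swap \<omega>"])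
  qed simp
qed simp

definition attracting :: "('s \<Rightarrow> 's pmf) \<Rightarrow> ('s \<Rightarrow> 'l) \<Rightarrow> ('s \<times> 's) set \<Rightarrow> bool" where
  "attracting \<tau> lab X \<longleftrightarrow> diag_pairs \<subseteq> X \<and> (\<forall>x\<in>X. \<exists>n. attracted \<tau> lab X n x)"

definition attraction_time :: "('s \<Rightarrow> 's pmf) \<Rightarrow> ('s \<Rightarrow> 'l) \<Rightarrow> ('s \<times> 's) set \<Rightarrow> 's \<times> 's \<Rightarrow> nat" where
  "attraction_time \<tau> lab X x = (LEAST n. attracted \<tau> lab X n x)"

lemma attraction_time_decreasing_coupling:
  assumes "attracting \<tau> lab X" and x: "x \<in> X" "x \<notin> diag_pairs"
  shows "lab (fst x) = lab (snd x) \<and> (\<exists>\<omega>\<in>couplings (\<tau> (fst x)) (\<tau> (snd x)). set_pmf \<omega> \<subseteq> X \<and>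
    (\<exists>y\<in>set_pmf \<omega>. attraction_time \<tau> lab X y < attraction_time \<tau> lab X x))"
proof -
  have "attracted \<tau> lab X (attraction_time \<tau> lab X x) x"
    unfolding attraction_time_def using assms by (auto simp: attracting_def intro: LeastI_ex)
  moreover obtain m where m: "attraction_time \<tau> lab X x = Suc m"
    using calculation x by (cases "attraction_time \<tau> lab X x") auto
  ultimately obtain \<omega> y where "lab (fst x) = lab (snd x)" "\<omega> \<in> couplings (\<tau> (fst x)) (\<tau> (snd x))"
    "set_pmf \<omega> \<subseteq> X" "y \<in> set_pmf \<omega>" and "attracted \<tau> lab X m y"
    using x by auto
  moreover from \<open>attracted \<tau> lab X m y\<close> have "attraction_time \<tau> lab X y < attraction_time \<tau> lab X x"
    unfolding m unfolding attraction_time_def by (simp add: Least_le le_imp_less_Suc)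
  ultimately show ?thesis by blast
qed

lemma attracting_policy:
  assumes "attracting \<tau> lab X"
  shows "\<exists>Q. policy \<tau> lab Q \<and> (\<forall>x\<in>X. set_pmf (Q x) \<subseteq> X \<and> (\<exists>n. can_reach Q diag_pairs n x))"
proof -
  let ?time = "attraction_time \<tau> lab X"
  have "\<forall>x\<in>X - diag_pairs. \<exists>\<omega>. lab (fst x) = lab (snd x) \<and>
      \<omega> \<in> couplings (\<tau> (fst x)) (\<tau> (snd x)) \<and> set_pmf \<omega> \<subseteq> X \<and> (\<exists>y\<in>set_pmf \<omega>. ?time y < ?time x)"
    using attraction_time_decreasing_coupling[OF assms] by blast
  from bchoice[OF this] obtain C where C: "\<And>x. x \<in> X - diag_pairs \<Longrightarrow> lab (fst x) = lab (snd x) \<and>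
      C x \<in> couplings (\<tau> (fst x)) (\<tau> (snd x)) \<and> set_pmf (C x) \<subseteq> X \<and>
      (\<exists>y\<in>set_pmf (C x). ?time y < ?time x)"
    by blast
  define Q where "Q x = (if x \<in> X - diag_pairs then C x
    else if x \<in> diag_pairs then diag_pmf (\<tau> (fst x)) else independent_policy \<tau> lab x)" for x
  have "policy \<tau> lab Q"
    unfolding Q_def using C
    by (intro policy_override policy_independent_policy) (auto simp: diag_pmf_couplings)
  moreover have closed: "set_pmf (Q x) \<subseteq> X" if "x \<in> X" for x
    using C[of x] that set_diag_pmf_subset assms by (auto simp: Q_def attracting_def)
  moreover have "can_reach Q diag_pairs (?time x) x" if "x \<in> X" for x
    using that
  proof (induction "?time x" arbitrary: x rule: less_induct)
    case less
    show ?case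
    proof (cases "x \<in> diag_pairs")
      case True then show ?thesis by (cases "?time x") auto
    next
      case False
      with C[of x] less.prems obtain y where y: "y \<in> set_pmf (Q x)" "?time y < ?time x"
        by (auto simp: Q_def)
      with closed less have "can_reach Q diag_pairs (?time y) y" by blast
      then have "can_reach Q diag_pairs (?time x - 1) y"
        by (rule can_reach_mono) (use y(2) in simp)
      moreover have "?time x = Suc (?time x - 1)"
        using y(2) by simp
      ultimately show ?thesis
        using y(1) by (metis can_reach.simps(2))
    qed
  qed
  ultimately show ?thesis by blast
qed

abbreviation robust_bisimilarity :: "('s \<Rightarrow> 's pmf) \<Rightarrow> ('s \<Rightarrow> 'l) \<Rightarrow> ('s \<times> 's) set" where
  "robust_bisimilarity \<tau> lab \<equiv> {(s, t). robust_bisimilar \<tau> lab s t}"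

lemma attracting_subset_robust_bisimilarity:
  fixes \<tau> :: "'s::finite \<Rightarrow> 's pmf"
  assumes "attracting \<tau> lab X"
  shows "X \<subseteq> robust_bisimilarity \<tau> lab"
proof
  fix x assume "x \<in> X"
  obtain Q where Q: "policy \<tau> lab Q" "\<forall>x\<in>X. set_pmf (Q x) \<subseteq> X \<and> (\<exists>n. can_reach Q diag_pairs n x)"
    using attracting_policy[OF assms] by blast
  with \<open>x \<in> X\<close> have "reach_prob Q diag_pairs x = 1"
    by (intro reach_prob_eq_1_if_closed[where W=X]) auto
  with Q(1) show "x \<in> robust_bisimilarity \<tau> lab"
    by (cases x) (auto simp: robust_bisimilar_def)
qed

lemma attracted_if_reach_prob_eq_1:
  fixes \<tau> :: "'s::finite \<Rightarrow> 's pmf"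
  assumes P: "policy \<tau> lab P"
  shows "reach_prob P diag_pairs x = 1 \<Longrightarrow> can_reach P diag_pairs n x \<Longrightarrow>
    attracted \<tau> lab (robust_bisimilarity \<tau> lab) n x"
proof (induction n arbitrary: x)
  case (Suc n)
  obtain a b where x: "x = (a, b)" by (cases x)
  show ?case
  proof (cases "a = b")
    case False
    have lab: "lab a = lab b"
    proof (rule ccontr)
      assume "lab a \<noteq> lab b"
      with P False x have "\<not> can_reach P diag_pairs (Suc n) x"
        by (intro can_reach_self_loop) (auto simp: policy_diff_label)
      with Suc.prems(2) show False by contradiction
    qed
    have succ: "reach_prob P diag_pairs z = 1" if "z \<in> set_pmf (P x)" for z
      using reach_prob_eq_1_successor[OF Suc.prems(1) _ that] False x by simp
    then have "set_pmf (P x) \<subseteq> robust_bisimilarity \<tau> lab"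
      using P by (auto simp: robust_bisimilar_def)
    moreover obtain y where "y \<in> set_pmf (P x)" "can_reach P diag_pairs n y"
      using Suc.prems(2) False x by auto
    moreover from this have "attracted \<tau> lab (robust_bisimilarity \<tau> lab) n y"
      using Suc.IH succ by blast
    moreover have "robust_bisimilar \<tau> lab a b"
      using P Suc.prems(1) x by (auto simp: robust_bisimilar_def)
    ultimately show ?thesis
      using policy_coupling[OF P lab] lab unfolding x attracted.simps by auto
  qed (simp add: x)
qed simp

lemma robust_bisimilar_attracted:
  fixes \<tau> :: "'s::finite \<Rightarrow> 's pmf"
  assumes "robust_bisimilar \<tau> lab s t"
  shows "\<exists>n. attracted \<tau> lab (robust_bisimilarity \<tau> lab) n (s, t)"
proof -
  obtain P where P: "policy \<tau> lab P" "reach_prob P diag_pairs (s, t) = 1"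
    using assms by (auto simp: robust_bisimilar_def)
  then obtain n where "can_reach P diag_pairs n (s, t)"
    using reach_prob_pos_imp_can_reach[of P diag_pairs "(s, t)"] by auto
  with P show ?thesis by (blast intro: attracted_if_reach_prob_eq_1)
qed

lemma attracting_diag_pairs: "attracting \<tau> lab diag_pairs"
  by (simp add: attracting_def) (metis attracted.simps(1) mem_diag_pairs_iff)

lemma robust_bisimilar_refl:
  fixes \<tau> :: "'s::finite \<Rightarrow> 's pmf"
  shows "robust_bisimilar \<tau> lab s s"
proof -
  have "diag_pairs \<subseteq> robust_bisimilarity \<tau> lab"
    by (rule attracting_subset_robust_bisimilarity) (rule attracting_diag_pairs)
  then show ?thesis by (auto dest: subsetD[of _ _ "(s, s)"])
qed

lemma attracting_robust_bisimilarity: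
  fixes \<tau> :: "'s::finite \<Rightarrow> 's pmf"
  shows "attracting \<tau> lab (robust_bisimilarity \<tau> lab)"
  unfolding attracting_def using robust_bisimilar_refl robust_bisimilar_attracted by auto

lemma robust_bisimilar_coupling:
  fixes \<tau> :: "'s::finite \<Rightarrow> 's pmf"
  assumes "robust_bisimilar \<tau> lab s t"
  shows "lab s = lab t \<and> (\<exists>\<omega>\<in>couplings (\<tau> s) (\<tau> t). set_pmf \<omega> \<subseteq> robust_bisimilarity \<tau> lab)"
proof (cases "s = t")
  case True
  have "set_pmf (diag_pmf (\<tau> s)) \<subseteq> robust_bisimilarity \<tau> lab"
    using set_diag_pmf_subset robust_bisimilar_refl by fastforce
  with True show ?thesis using diag_pmf_couplings by blast
next
  case False
  obtain n where "attracted \<tau> lab (robust_bisimilarity \<tau> lab) n (s, t)"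
    using robust_bisimilar_attracted[OF assms] ..
  with False show ?thesis by (cases n) auto
qed

lemma robust_bisimilar_sym:
  fixes \<tau> :: "'s::finite \<Rightarrow> 's pmf"
  assumes "robust_bisimilar \<tau> lab s t"
  shows "robust_bisimilar \<tau> lab t s"
proof -
  let ?R = "robust_bisimilarity \<tau> lab"
  have "attracting \<tau> lab (?R\<inverse>)"
    unfolding attracting_def
  proof (intro conjI ballI)
    show "diag_pairs \<subseteq> ?R\<inverse>"
      using robust_bisimilar_refl by auto
    fix x assume "x \<in> ?R\<inverse>"
    then obtain n where "attracted \<tau> lab ?R n (prod.swap x)"
      using robust_bisimilar_attracted by (cases x) fastforce
    from attracted_swap[OF this] show "\<exists>n. attracted \<tau> lab (?R\<inverse>) n x"
      by auto
  qed
  with assms show ?thesis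
    using attracting_subset_robust_bisimilarity by blast
qed

lemma robust_bisimilar_relcomp_attracted:
  fixes \<tau> :: "'s::finite \<Rightarrow> 's pmf"
  assumes "attracted \<tau> lab (robust_bisimilarity \<tau> lab) n (a, b)" and "robust_bisimilar \<tau> lab b c"
  shows "\<exists>m. attracted \<tau> lab (robust_bisimilarity \<tau> lab O robust_bisimilarity \<tau> lab) m (a, c)"
proof -
  let ?R = "robust_bisimilarity \<tau> lab"
  have base: "\<exists>m. attracted \<tau> lab (?R O ?R) m (a, c)" if "robust_bisimilar \<tau> lab a c" for a c
  proof -
    have "?R \<subseteq> ?R O ?R"
      using robust_bisimilar_refl by blast
    with that show ?thesis
      using robust_bisimilar_attracted attracted_mono by blast
  qed
  show ?thesis
    using assms
  proof (induction n arbitrary: a b c)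
    case 0 then show ?case using base by simp
  next
    case (Suc n)
    show ?case
    proof (cases "a = b")
      case True with Suc.prems base show ?thesis by simp
    next
      case False
      with Suc.prems(1) obtain \<omega>1 a1 b1 where \<omega>1: "\<omega>1 \<in> couplings (\<tau> a) (\<tau> b)" "set_pmf \<omega>1 \<subseteq> ?R"
        "(a1, b1) \<in> set_pmf \<omega>1" "attracted \<tau> lab ?R n (a1, b1)"
        and "lab a = lab b" "robust_bisimilar \<tau> lab a b"
        by auto
      obtain \<omega>2 where \<omega>2: "\<omega>2 \<in> couplings (\<tau> b) (\<tau> c)" "set_pmf \<omega>2 \<subseteq> ?R" and "lab b = lab c"
        using robust_bisimilar_coupling[OF Suc.prems(2)] by blast
      have "b1 \<in> fst ` set_pmf \<omega>2"
        using \<omega>1(3) couplings_common_marginal[OF \<omega>1(1) \<omega>2(1)] by force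
      then obtain c1 where c1: "(b1, c1) \<in> set_pmf \<omega>2"
        by force
      then obtain m where m: "attracted \<tau> lab (?R O ?R) m (a1, c1)"
        using Suc.IH \<omega>1(4) \<omega>2(2) by blast
      obtain \<omega> where \<omega>: "\<omega> \<in> couplings (\<tau> a) (\<tau> c)" "set_pmf \<omega> = set_pmf \<omega>1 O set_pmf \<omega>2"
        using couplings_relcomp[OF \<omega>1(1) \<omega>2(1)] by blast
      have "set_pmf \<omega> \<subseteq> ?R O ?R" "(a1, c1) \<in> set_pmf \<omega>"
        using \<omega>(2) \<omega>1(2,3) \<omega>2(2) c1 by auto
      moreover have "(a, c) \<in> ?R O ?R"
        using \<open>robust_bisimilar \<tau> lab a b\<close> Suc.prems(2) by blast
      ultimately have "attracted \<tau> lab (?R O ?R) (Suc m) (a, c)"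
        using \<omega>(1) m \<open>lab a = lab b\<close> \<open>lab b = lab c\<close>
        by (simp only: attracted.simps fst_conv snd_conv) blast
      then show ?thesis ..
    qed
  qed
qed

lemma robust_bisimilar_trans:
  fixes \<tau> :: "'s::finite \<Rightarrow> 's pmf"
  assumes "robust_bisimilar \<tau> lab s t" and "robust_bisimilar \<tau> lab t u"
  shows "robust_bisimilar \<tau> lab s u"
proof -
  let ?R = "robust_bisimilarity \<tau> lab"
  have "\<exists>m. attracted \<tau> lab (?R O ?R) m x" if "x \<in> ?R O ?R" for x
  proof -
    from that obtain a b c where "x = (a, c)" "robust_bisimilar \<tau> lab a b" "robust_bisimilar \<tau> lab b c"
      by auto
    then show ?thesis
      using robust_bisimilar_attracted robust_bisimilar_relcomp_attracted by blast
  qed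
  moreover have "diag_pairs \<subseteq> ?R O ?R"
    by clarsimp (blast intro: robust_bisimilar_refl)
  ultimately have "attracting \<tau> lab (?R O ?R)"
    by (simp add: attracting_def)
  with assms show ?thesis
    using attracting_subset_robust_bisimilarity by blast
qed

lemma robust_bisimilarity_supported_paths:
  fixes \<tau> :: "'s::finite \<Rightarrow> 's pmf"
  shows "\<exists>P. policy \<tau> lab P \<and> (\<forall>x\<in>robust_bisimilarity \<tau> lab. \<exists>xs. is_path P xs \<and> hd xs = x \<and>
    last xs \<in> diag_pairs \<and> supports P (robust_bisimilarity \<tau> lab) xs)"
proof -
  let ?R = "robust_bisimilarity \<tau> lab"
  obtain P where P: "policy \<tau> lab P"
    and closed: "\<And>x. x \<in> ?R \<Longrightarrow> set_pmf (P x) \<subseteq> ?R"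
    and reach: "\<And>x. x \<in> ?R \<Longrightarrow> \<exists>n. can_reach P diag_pairs n x"
    using attracting_policy[OF attracting_robust_bisimilarity] by metis
  have "\<exists>xs. is_path P xs \<and> hd xs = x \<and> last xs \<in> diag_pairs \<and> supports P ?R xs" if x: "x \<in> ?R" for x
  proof -
    obtain xs where "is_path P xs" "hd xs = x" "last xs \<in> diag_pairs" and "set xs \<subseteq> ?R"
      using reach[OF x] can_reach_imp_path[of P diag_pairs _ x ?R] x closed by blast
    moreover from \<open>set xs \<subseteq> ?R\<close> have "supports P ?R xs"
      unfolding supports_def using closed by blast
    ultimately show ?thesis by blast
  qed
  with P show ?thesis by blast
qed

theorem proposition3:
  fixes \<tau> :: "'s::finite \<Rightarrow> 's pmf" and lab :: "'s \<Rightarrow> 'l::finite"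
  assumes "card (range lab) \<ge> 2"
  shows "robust_bisimulation \<tau> lab {(s,t). robust_bisimilar \<tau> lab s t}"
proof -
  have "equiv UNIV (robust_bisimilarity \<tau> lab)"
    using robust_bisimilar_refl robust_bisimilar_sym robust_bisimilar_trans
    by (auto simp: equiv_def refl_on_def sym_def trans_def)
  then have "bisimulation \<tau> lab (robust_bisimilarity \<tau> lab)"
    using robust_bisimilar_coupling by (auto simp: bisimulation_def)
  with robust_bisimilarity_supported_paths[of \<tau> lab] show ?thesis
    unfolding robust_bisimulation_def by blast
qed

end
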